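(* The correspondence $\underline\nu^*:\mathbf S^k_{++}\rightrightarrows K$, $A\mapsto\operatorname{argmin}_{\underline\nu\in K}F(\underline\nu,A)$, is upper hemicontinuous. Consequently, if $\underline\nu^*(A^* )=\{\underline\nu^0\}$ is a singleton and $A^{(N)}\to A^*$ in $\mathbf S^k_{++}$, then for every $\varepsilon>0$ there is $N_0$ such that $\|\underline\nu-\underline\nu^0\|<\varepsilon$ whenever $\underline\nu\in\underline\nu^*(A^{(N)})$ and $N\ge N_0$.
   Context: $\mathbf S^k_{++}$ is the set of $k\times k$ symmetric positive-definite matrices. $\mathcal I$ is a collection of nonempty subsets of $\{1,\dots,k\}$, $a\in\mathbb{R}^k\setminus\{0\}$ with $\operatorname{supp}(a)\subseteq\bigcup\mathcal I$. $P_I:\mathbb{R}^k\to\mathbb{R}^{|I|}$ is the coordinate projection onto $I$, and for $A\in\mathbf S^k_{++}$, $A_I^\dagger:=P_I^\top(P_IAP_I^\top)^{-1}P_I$. Costs $c_I\in\mathbb{R}^m_{\ge0}$, each with at least one positive coordinate, and $B_0\in\mathbb{R}^m_{>0}$; vector inequalities componentwise. $K=\{\underline\nu\in\mathbb{R}^{\mathcal I}:\underline\nu\ge0,\ \sum_I\nu_Ic_I\le B_0\}$ (compact). $F(\underline\nu,A)=a^\top(\sum_I\nu_IA_I^\dagger)^\dagger a$ if $a\in\operatorname{range}(\sum_I\nu_IA_I^\dagger)$ and $F(\underline\nu,A)=\infty$ otherwise; $\dagger$ denotes the Moore–Penrose pseudo-inverse. *)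

theory Defs
  imports "HOL-Analysis.Analysis" "HOL-Library.Extended_Real"
begin

definition spd :: "(real^'k^'k) set" where
  "spd = {A. transpose A = A \<and> (\<forall>x::real^'k. x \<noteq> 0 \<longrightarrow> x \<bullet> (A *v x) > 0)}"

definition pinv :: "real^'n^'n \<Rightarrow> real^'n^'n" where
  "pinv M = (THE X. M ** X ** M = M \<and> X ** M ** X = X \<and>
                    transpose (M ** X) = M ** X \<and> transpose (X ** M) = X ** M)"

text \<open>Inverse of the compressed matrix P_I A P_I^T, written with rows/columns indexed
  by the elements of I (a relabelling of 1..|I|); it is zero outside I x I.\<close>
definition sub_inv :: "real^'k^'k \<Rightarrow> 'k set \<Rightarrow> 'k \<Rightarrow> 'k \<Rightarrow> real" where
  "sub_inv A I = (THE B. (\<forall>i j. (i \<notin> I \<or> j \<notin> I) \<longrightarrow> B i j = 0) \<and>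
        (\<forall>i\<in>I. \<forall>j\<in>I. (\<Sum>l\<in>I. A $ i $ l * B l j) = (if i = j then 1 else 0)))"

text \<open>A_I^dagger = P_I^T (P_I A P_I^T)^{-1} P_I, as a k x k matrix.\<close>
definition dagger_sub :: "real^'k^'k \<Rightarrow> 'k set \<Rightarrow> real^'k^'k" where
  "dagger_sub A I = (\<chi> i j. if i \<in> I \<and> j \<in> I then sub_inv A I i j else 0)"

text \<open>The objective F(nu, A); the collection \<I> is indexed injectively by the finite type 'i.\<close>
definition Fobj :: "('i::finite \<Rightarrow> 'k::finite set) \<Rightarrow> real^'k \<Rightarrow> real^'i \<Rightarrow> real^'k^'k \<Rightarrow> ereal" where
  "Fobj Iset a \<nu> A =
     (let M = (\<Sum>t\<in>UNIV. (\<nu> $ t) *\<^sub>R dagger_sub A (Iset t)) in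
      if a \<in> range (\<lambda>x. M *v x) then ereal (a \<bullet> (pinv M *v a)) else \<infinity>)"

definition Kset :: "('i::finite \<Rightarrow> real^'m) \<Rightarrow> real^'m \<Rightarrow> (real^'i) set" where
  "Kset c B0 = {\<nu>. (\<forall>t. \<nu> $ t \<ge> 0) \<and> (\<forall>j. (\<Sum>t\<in>UNIV. \<nu> $ t * c t $ j) \<le> B0 $ j)}"

definition argminF :: "('i::finite \<Rightarrow> 'k::finite set) \<Rightarrow> real^'k \<Rightarrow> ('i \<Rightarrow> real^'m)
    \<Rightarrow> real^'m \<Rightarrow> real^'k^'k \<Rightarrow> (real^'i) set" where
  "argminF Iset a c B0 A =
     {\<nu> \<in> Kset c B0. \<forall>\<mu> \<in> Kset c B0. Fobj Iset a \<nu> A \<le> Fobj Iset a \<mu> A}"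

definition upper_hemicont :: "'a::topological_space set \<Rightarrow> ('a \<Rightarrow> 'b::topological_space set) \<Rightarrow> bool" where
  "upper_hemicont S \<Phi> \<longleftrightarrow> (\<forall>x\<in>S. \<forall>V. open V \<and> \<Phi> x \<subseteq> V \<longrightarrow>
      (\<exists>U. open U \<and> x \<in> U \<and> (\<forall>y\<in>U \<inter> S. \<Phi> y \<subseteq> V)))"

end

(* For symmetric positive semidefinite M, the value a.M^+ a (infinite when a is not in the
   range of M) is the supremum of 2 a.x - x.Mx over all x.  Applied to M = sum_I nu_I A_I^dagger,
   where each x.A_I^dagger x depends continuously on A in spd, this exhibits F as jointly lower
   semicontinuous in (nu, A).  Conversely, if F(mu, A) is finite, write a = M y and
   w_I = A_I^dagger y; then F(mu, B) <= sum_I mu_I w_I.B w_I for every B, with equality at B = A,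
   so F(mu, .) is upper semicontinuous at A.  As in Berge's maximum theorem, the two
   semicontinuities make the graph of the argmin correspondence closed, and compactness of K
   turns this into upper hemicontinuity. *)

theory Submission
  imports Defs
begin

lemma spd_symmetric: "A \<in> spd \<Longrightarrow> transpose A = A"
  by (simp add: spd_def)

lemma spd_quadratic_pos: "A \<in> spd \<Longrightarrow> x \<noteq> 0 \<Longrightarrow> 0 < x \<bullet> (A *v x)"
  by (simp add: spd_def)

lemma spd_quadratic_nonneg: "A \<in> spd \<Longrightarrow> 0 \<le> x \<bullet> (A *v x)"
  using spd_quadratic_pos[of A x] by (cases "x = 0") auto

lemma inner_matrix_vector_transpose:
  fixes A :: "real^'n^'m"
  shows "(A *v u) \<bullet> w = u \<bullet> (transpose A *v w)"
  by (metis dot_lmul_matrix vector_transpose_matrix)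

lemma symmetric_inner_matrix_vector:
  fixes M :: "real^'n^'n"
  shows "transpose M = M \<Longrightarrow> (M *v u) \<bullet> w = u \<bullet> (M *v w)"
  by (metis inner_matrix_vector_transpose)

lemma symmetric_matrixI:
  fixes M :: "real^'n^'n"
  assumes "\<And>x y. (M *v x) \<bullet> y = x \<bullet> (M *v y)"
  shows "transpose M = M"
proof -
  have "(transpose M *v x) \<bullet> y = (M *v x) \<bullet> y" for x y
    using inner_matrix_vector_transpose[of "transpose M" x y] assms[of x y] by simp
  then have "transpose M *v x = M *v x" for x
    by (metis vector_eq_rdot)
  then show ?thesis
    by (simp add: matrix_eq)
qed

section \<open>Compressed inverses\<close>

definition supported_on :: "real^'k \<Rightarrow> 'k set \<Rightarrow> bool" where
  "supported_on v I \<longleftrightarrow> (\<forall>i. i \<notin> I \<longrightarrow> v $ i = 0)"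

lemma inner_supported_cong:
  assumes "supported_on d I" and "\<And>i. i \<in> I \<Longrightarrow> w $ i = w' $ i"
  shows "d \<bullet> w = d \<bullet> w'"
  unfolding inner_vec_def
  by (rule sum.cong) (use assms in \<open>auto simp: supported_on_def\<close>)

lemma matrix_vector_mult_supported:
  assumes "supported_on w I"
  shows "(A *v w) $ i = (\<Sum>l\<in>I. A $ i $ l * w $ l)"
  unfolding matrix_vector_mult_def
  by (simp, rule sum.mono_neutral_right) (use assms in \<open>auto simp: supported_on_def\<close>)

lemma spd_subsystem_solution_unique:
  assumes A: "A \<in> spd" and "supported_on v I" "supported_on v' I"
    and "\<And>i. i \<in> I \<Longrightarrow> (A *v v) $ i = (A *v v') $ i"
  shows "v = v'"
proof -
  define d where "d = v - v'"
  have d: "supported_on d I"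
    using assms(2,3) by (simp add: supported_on_def d_def)
  have "d \<bullet> (A *v d) = d \<bullet> (0::real^_)"
    by (rule inner_supported_cong[OF d])
      (use assms(4) in \<open>simp add: d_def matrix_vector_mult_diff_distrib\<close>)
  then have "d = 0"
    using spd_quadratic_pos[OF A, of d] by force
  then show ?thesis
    by (simp add: d_def)
qed

lemma spd_subsystem_solvable:
  fixes A :: "real^'k^'k"
  assumes A: "A \<in> spd"
  shows "\<exists>v. supported_on v I \<and> (\<forall>i\<in>I. (A *v v) $ i = x $ i)"
proof -
  \<comment> \<open>solve with the block matrix diag(A restricted to I x I, identity), which is injective\<close>
  define A' :: "real^'k^'k" where
    "A' = (\<chi> i j. if i \<in> I then (if j \<in> I then A $ i $ j else 0) else (if i = j then 1 else 0))"
  have outside: "(A' *v u) $ i = u $ i" if "i \<notin> I" for u i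
  proof -
    have "(A' *v u) $ i = (\<Sum>j\<in>UNIV. (if i = j then 1 else 0) * u $ j)"
      using that by (simp add: A'_def matrix_vector_mult_def)
    also have "\<dots> = (\<Sum>j\<in>UNIV. if i = j then u $ j else 0)"
      by (rule sum.cong) auto
    finally show ?thesis
      by simp
  qed
  have inside: "(A' *v u) $ i = (A *v u) $ i" if "i \<in> I" "supported_on u I" for u i
    using that unfolding A'_def matrix_vector_mult_def supported_on_def
    by (auto intro!: sum.cong)
  have lin: "linear ((*v) A')"
    by (simp add: matrix_vector_mul_linear)
  have "inj ((*v) A')"
    unfolding linear_inj_iff_eq_0[OF lin]
  proof (intro allI impI)
    fix u assume u: "A' *v u = 0"
    have su: "supported_on u I"
      unfolding supported_on_def using outside[of _ u] u by (metis zero_index)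
    have "u \<bullet> (A *v u) = u \<bullet> (0::real^_)"
      by (rule inner_supported_cong[OF su]) (use inside[OF _ su] u in auto)
    then show "u = 0"
      using spd_quadratic_pos[OF A, of u] by force
  qed
  then have "surj ((*v) A')"
    using eucl.linear_inj_imp_surj[OF lin] by blast
  then obtain v where v: "A' *v v = (\<chi> i. if i \<in> I then x $ i else 0)"
    by (metis surjD)
  have sv: "supported_on v I"
    unfolding supported_on_def using outside[of _ v] v by auto
  show ?thesis
    using sv inside[OF _ sv] v by auto
qed

definition is_sub_inv :: "real^'k^'k \<Rightarrow> 'k set \<Rightarrow> ('k \<Rightarrow> 'k \<Rightarrow> real) \<Rightarrow> bool" where
  "is_sub_inv A I B \<longleftrightarrow> (\<forall>i j. (i \<notin> I \<or> j \<notin> I) \<longrightarrow> B i j = 0) \<and>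
        (\<forall>i\<in>I. \<forall>j\<in>I. (\<Sum>l\<in>I. A $ i $ l * B l j) = (if i = j then 1 else 0))"

lemma spd_ex1_sub_inv:
  fixes A :: "real^'k^'k"
  assumes A: "A \<in> spd"
  shows "\<exists>!B. is_sub_inv A I B"
proof -
  \<comment> \<open>the columns of any such B solve the subsystems with the unit vectors as right-hand sides\<close>
  define col :: "('k \<Rightarrow> 'k \<Rightarrow> real) \<Rightarrow> 'k \<Rightarrow> real^'k" where "col B j = (\<chi> l. B l j)" for B j
  have col_solves: "supported_on (col B j) I \<and> (\<forall>i\<in>I. (A *v col B j) $ i = axis j 1 $ i)"
    if B: "is_sub_inv A I B" and j: "j \<in> I" for B j
  proof -
    have s: "supported_on (col B j) I"
      using B by (auto simp: is_sub_inv_def supported_on_def col_def)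
    moreover have "(A *v col B j) $ i = axis j 1 $ i" if "i \<in> I" for i
      unfolding matrix_vector_mult_supported[OF s] using B j that
      by (simp add: is_sub_inv_def col_def axis_def)
    ultimately show ?thesis
      by blast
  qed
  have "\<forall>j. \<exists>v. supported_on v I \<and> (\<forall>i\<in>I. (A *v v) $ i = axis j 1 $ i)"
    using spd_subsystem_solvable[OF A] by blast
  then obtain sol where sol: "\<And>j. supported_on (sol j) I \<and> (\<forall>i\<in>I. (A *v sol j) $ i = axis j 1 $ i)"
    by metis
  define B where "B i j = (if j \<in> I then sol j $ i else 0)" for i j
  have B: "is_sub_inv A I B"
    unfolding is_sub_inv_def
  proof (intro conjI allI impI ballI)
    fix i j assume "i \<notin> I \<or> j \<notin> I"
    then show "B i j = 0"
      using sol[of j] by (auto simp: B_def supported_on_def)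
  next
    fix i j assume ij: "i \<in> I" "j \<in> I"
    have "(\<Sum>l\<in>I. A $ i $ l * B l j) = (A *v sol j) $ i"
      using ij matrix_vector_mult_supported[of "sol j" I A i] sol[of j] by (simp add: B_def)
    then show "(\<Sum>l\<in>I. A $ i $ l * B l j) = (if i = j then 1 else 0)"
      using sol[of j] ij by (simp add: axis_def)
  qed
  have "B' = B" if B': "is_sub_inv A I B'" for B'
  proof (intro ext)
    fix l j
    show "B' l j = B l j"
    proof (cases "j \<in> I")
      case True
      have "col B' j = col B j"
        by (rule spd_subsystem_solution_unique[OF A])
          (use col_solves[OF B' True] col_solves[OF B True] in auto)
      then show ?thesis
        unfolding col_def by (simp add: vec_eq_iff)
    qed (use B B' in \<open>auto simp: is_sub_inv_def\<close>)
  qed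
  with B show ?thesis
    by blast
qed

lemma sub_inv_is_sub_inv: "A \<in> spd \<Longrightarrow> is_sub_inv A I (sub_inv A I)"
  unfolding sub_inv_def using theI'[OF spd_ex1_sub_inv[of A I]]
  by (simp add: is_sub_inv_def)

lemma dagger_sub_mult_vector_nth:
  "(dagger_sub A I *v x) $ l = (if l \<in> I then (\<Sum>j\<in>I. sub_inv A I l j * x $ j) else 0)"
proof -
  have "(dagger_sub A I *v x) $ l = (\<Sum>j\<in>UNIV. if j \<in> I then (if l \<in> I then sub_inv A I l j * x $ j else 0) else 0)"
    by (auto simp: dagger_sub_def matrix_vector_mult_def intro: sum.cong)
  then show ?thesis
    by (simp add: sum.If_cases)
qed

lemma dagger_sub_supported: "supported_on (dagger_sub A I *v x) I"
  by (simp add: supported_on_def dagger_sub_mult_vector_nth)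

lemma dagger_sub_solves:
  assumes A: "A \<in> spd" and i: "i \<in> I"
  shows "(A *v (dagger_sub A I *v x)) $ i = x $ i"
proof -
  have "(A *v (dagger_sub A I *v x)) $ i = (\<Sum>l\<in>I. \<Sum>j\<in>I. A $ i $ l * sub_inv A I l j * x $ j)"
    by (simp add: matrix_vector_mult_supported[OF dagger_sub_supported] dagger_sub_mult_vector_nth
        sum_distrib_left mult.assoc)
  also have "\<dots> = (\<Sum>j\<in>I. (\<Sum>l\<in>I. A $ i $ l * sub_inv A I l j) * x $ j)"
    by (subst sum.swap) (simp add: sum_distrib_right)
  also have "\<dots> = (\<Sum>j\<in>I. if i = j then x $ j else 0)"
    using sub_inv_is_sub_inv[OF A, of I] i by (intro sum.cong) (auto simp: is_sub_inv_def)
  also have "\<dots> = x $ i"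
    using i by simp
  finally show ?thesis .
qed

lemma inner_supported_dagger_sub:
  "A \<in> spd \<Longrightarrow> supported_on w I \<Longrightarrow> w \<bullet> (A *v (dagger_sub A I *v x)) = w \<bullet> x"
  by (rule inner_supported_cong) (auto simp: dagger_sub_solves)

lemma dagger_sub_quadratic:
  "A \<in> spd \<Longrightarrow> x \<bullet> (dagger_sub A I *v x) = (dagger_sub A I *v x) \<bullet> (A *v (dagger_sub A I *v x))"
  by (simp add: inner_supported_dagger_sub dagger_sub_supported inner_commute)

lemma dagger_sub_symmetric:
  assumes A: "A \<in> spd"
  shows "(dagger_sub A I *v x) \<bullet> y = x \<bullet> (dagger_sub A I *v y)"
proof -
  let ?u = "dagger_sub A I *v x" and ?v = "dagger_sub A I *v y"
  have "?u \<bullet> y = ?u \<bullet> (A *v ?v)"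
    using inner_supported_dagger_sub[OF A dagger_sub_supported[of A I x], of y] by simp
  also have "\<dots> = ?v \<bullet> (A *v ?u)"
    using symmetric_inner_matrix_vector[OF spd_symmetric[OF A], of ?u ?v] by (simp add: inner_commute)
  also have "\<dots> = ?v \<bullet> x"
    using inner_supported_dagger_sub[OF A dagger_sub_supported[of A I y], of x] .
  finally show ?thesis
    by (simp add: inner_commute)
qed

lemma dagger_sub_quadratic_nonneg: "A \<in> spd \<Longrightarrow> 0 \<le> x \<bullet> (dagger_sub A I *v x)"
  by (simp add: dagger_sub_quadratic spd_quadratic_nonneg)

lemma dagger_sub_variational:
  assumes A: "A \<in> spd" and w: "supported_on w I"
  shows "2 * (w \<bullet> x) - x \<bullet> (dagger_sub A I *v x) \<le> w \<bullet> (A *v w)"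
proof -
  let ?v = "dagger_sub A I *v x"
  have "0 \<le> (w - ?v) \<bullet> (A *v (w - ?v))"
    by (rule spd_quadratic_nonneg[OF A])
  also have "\<dots> = w \<bullet> (A *v w) - 2 * (w \<bullet> (A *v ?v)) + ?v \<bullet> (A *v ?v)"
    using symmetric_inner_matrix_vector[OF spd_symmetric[OF A], of ?v w]
    by (simp add: matrix_vector_mult_diff_distrib inner_diff_left inner_diff_right inner_commute)
  finally show ?thesis
    using inner_supported_dagger_sub[OF A w, of x] dagger_sub_quadratic[OF A, of x I] by linarith
qed

section \<open>The Moore--Penrose inverse of a symmetric matrix\<close>

definition is_penrose_inverse :: "real^'n^'n \<Rightarrow> real^'n^'n \<Rightarrow> bool" where
  "is_penrose_inverse M X \<longleftrightarrow> M ** X ** M = M \<and> X ** M ** X = X \<and>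
      transpose (M ** X) = M ** X \<and> transpose (X ** M) = X ** M"

lemma is_penrose_inverse_unique:
  assumes "is_penrose_inverse M X" and "is_penrose_inverse M Y"
  shows "X = Y"
proof -
  have x1: "M ** X ** M = M" and x2: "X ** M ** X = X" and x3: "transpose (M ** X) = M ** X"
    and x4: "transpose (X ** M) = X ** M"
    using assms(1) by (auto simp: is_penrose_inverse_def)
  have y1: "M ** Y ** M = M" and y2: "Y ** M ** Y = Y" and y3: "transpose (M ** Y) = M ** Y"
    and y4: "transpose (Y ** M) = Y ** M"
    using assms(2) by (auto simp: is_penrose_inverse_def)
  have "X = X ** transpose (M ** X)"
    using x2 x3 by (simp add: matrix_mul_assoc)
  also have "\<dots> = X ** transpose X ** transpose (M ** Y ** M)"
    using y1 by (simp add: matrix_transpose_mul matrix_mul_assoc)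
  also have "\<dots> = X ** transpose (M ** X) ** transpose (M ** Y)"
    by (simp add: matrix_transpose_mul matrix_mul_assoc)
  also have "\<dots> = X ** M ** Y"
    using x2 x3 y3 by (simp add: matrix_mul_assoc)
  finally have X: "X = X ** M ** Y" .
  have "Y = transpose (Y ** M) ** Y"
    using y2 y4 by simp
  also have "\<dots> = transpose (M ** X ** M) ** transpose Y ** Y"
    using x1 by (simp add: matrix_transpose_mul)
  also have "\<dots> = transpose (X ** M) ** transpose (Y ** M) ** Y"
    by (simp add: matrix_transpose_mul matrix_mul_assoc)
  also have "\<dots> = X ** M ** (Y ** M ** Y)"
    using x4 y4 by (simp add: matrix_mul_assoc)
  also have "\<dots> = X ** M ** Y"
    using y2 by simp
  finally show ?thesis
    using X by simp
qed

lemma symmetric_kernel_orthogonal_range: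
  fixes M :: "real^'n^'n"
  assumes S: "transpose M = M" and orth: "\<And>w. z \<bullet> (M *v w) = 0"
  shows "M *v z = 0"
proof -
  have "(M *v z) \<bullet> (M *v z) = z \<bullet> (M *v (M *v z))"
    by (rule symmetric_inner_matrix_vector[OF S])
  then show ?thesis
    using orth by simp
qed

lemma symmetric_range_kernel_decomp:
  fixes M :: "real^'n^'n"
  assumes S: "transpose M = M"
  obtains u z where "x = M *v u + z" and "\<And>w. z \<bullet> (M *v w) = 0" and "M *v z = 0"
proof -
  have span: "span (range ((*v) M)) = range ((*v) M)"
    by (simp add: span_eq_iff linear_subspace_image matrix_vector_mul_linear)
  obtain r z where "r \<in> span (range ((*v) M))" "\<And>w. w \<in> span (range ((*v) M)) \<Longrightarrow> orthogonal z w"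
    and "x = r + z"
    using orthogonal_subspace_decomp_exists[of "range ((*v) M)" x] by blast
  then have "r \<in> range ((*v) M)" "\<And>w. z \<bullet> (M *v w) = 0" "x = r + z"
    by (simp_all add: span orthogonal_def)
  then show ?thesis
    using that symmetric_kernel_orthogonal_range[OF S] by blast
qed

lemma is_penrose_inverse_exists:
  fixes M :: "real^'n^'n"
  assumes S: "transpose M = M"
  shows "\<exists>X. is_penrose_inverse M X"
proof -
  let ?R = "range ((*v) M)"
  have span: "span ?R = ?R"
    by (simp add: span_eq_iff linear_subspace_image matrix_vector_mul_linear)
  have "inj_on ((*v) M) (span ?R)"
  proof (rule inj_onI)
    fix r s assume "r \<in> span ?R" "s \<in> span ?R" and eq: "M *v r = M *v s"
    then obtain u where u: "r - s = M *v u"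
      by (auto simp: span matrix_vector_mult_diff_distrib[symmetric])
    have "(r - s) \<bullet> (r - s) = u \<bullet> (M *v (r - s))"
      unfolding u by (rule symmetric_inner_matrix_vector[OF S])
    then show "r = s"
      using eq by (simp add: matrix_vector_mult_diff_distrib)
  qed
  then obtain g where g: "range g \<subseteq> span ?R" "linear g" "\<forall>r\<in>span ?R. g (M *v r) = r"
    using linear_inj_on_left_inverse[OF matrix_vector_mul_linear] by blast
  have g_range: "g y \<in> ?R" for y
    using g(1) span by auto
  have g_inv: "g (M *v r) = r" if "r \<in> ?R" for r
    using g(3) span that by auto
  \<comment> \<open>g \<circ> M is the orthogonal projection onto the range of M\<close>
  have proj: "g (M *v (M *v u + z)) = M *v u" if "M *v z = 0" for u z
    using g_inv that by (simp add: matrix_vector_right_distrib)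
  have M_g: "M *v g y = y" if "y \<in> ?R" for y
  proof -
    from that obtain x where "y = M *v x"
      by blast
    moreover obtain u z where "x = M *v u + z" "M *v z = 0"
      using symmetric_range_kernel_decomp[OF S, where x = x] by blast
    ultimately show ?thesis
      using proj by (simp add: matrix_vector_right_distrib)
  qed
  have proj_sym: "g (M *v x) \<bullet> y = x \<bullet> g (M *v y)" for x y
  proof -
    obtain u z where x: "x = M *v u + z" "\<And>w. z \<bullet> (M *v w) = 0" "M *v z = 0"
      using symmetric_range_kernel_decomp[OF S, where x = x] by blast
    obtain u' z' where y: "y = M *v u' + z'" "\<And>w. z' \<bullet> (M *v w) = 0" "M *v z' = 0"
      using symmetric_range_kernel_decomp[OF S, where x = y] by blast
    show ?thesis
      using x y proj by (simp add: inner_add_left inner_add_right inner_commute)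
  qed
  define X where "X = matrix (g \<circ> g \<circ> (*v) M)"
  have X: "X *v x = g (g (M *v x))" for x
    unfolding X_def using g(2) by (simp add: matrix_vector_mul linear_compose matrix_vector_mul_linear)
  have MX: "(M ** X) *v x = g (M *v x)" for x
    by (simp add: matrix_vector_mul_assoc[symmetric] X M_g g_range)
  have XM: "(X ** M) *v x = g (M *v x)" for x
    by (simp add: matrix_vector_mul_assoc[symmetric] X g_inv)
  have "is_penrose_inverse M X"
    unfolding is_penrose_inverse_def
  proof (intro conjI)
    show "M ** X ** M = M"
      by (simp add: matrix_eq matrix_vector_mul_assoc[symmetric] X M_g g_range g_inv)
    show "X ** M ** X = X"
      by (simp add: matrix_eq matrix_vector_mul_assoc[symmetric] X M_g g_range g_inv)
    show "transpose (M ** X) = M ** X" "transpose (X ** M) = X ** M"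
      by (rule symmetric_matrixI, simp add: MX XM proj_sym)+
  qed
  then show ?thesis
    by blast
qed

lemma pinv_is_penrose_inverse:
  fixes M :: "real^'n^'n"
  assumes "transpose M = M"
  shows "is_penrose_inverse M (pinv M)"
proof -
  have "\<exists>!X. is_penrose_inverse M X"
    using is_penrose_inverse_exists[OF assms] is_penrose_inverse_unique by blast
  then show ?thesis
    unfolding pinv_def using theI'[of "is_penrose_inverse M"] by (simp add: is_penrose_inverse_def)
qed

definition pinv_form :: "real^'n \<Rightarrow> real^'n^'n \<Rightarrow> ereal" where
  "pinv_form a M = (if a \<in> range (\<lambda>x. M *v x) then ereal (a \<bullet> (pinv M *v a)) else \<infinity>)"

lemma pinv_form_range:
  fixes M :: "real^'n^'n"
  assumes S: "transpose M = M"
  shows "pinv_form (M *v y) M = ereal (y \<bullet> (M *v y))"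
proof -
  have "M ** pinv M ** M = M"
    using pinv_is_penrose_inverse[OF S] by (simp add: is_penrose_inverse_def)
  then have "(M *v y) \<bullet> (pinv M *v (M *v y)) = y \<bullet> (M *v y)"
    by (simp add: symmetric_inner_matrix_vector[OF S] matrix_vector_mul_assoc matrix_mul_assoc)
  then show ?thesis
    by (auto simp: pinv_form_def)
qed

lemma kernel_witness_not_in_range:
  fixes M :: "real^'n^'n"
  assumes S: "transpose M = M" and a: "a \<notin> range (\<lambda>x. M *v x)"
  obtains z where "M *v z = 0" and "0 < a \<bullet> z"
proof -
  obtain u z where decomp: "a = M *v u + z" "\<And>w. z \<bullet> (M *v w) = 0" "M *v z = 0"
    using symmetric_range_kernel_decomp[OF S, where x = a] by blast
  have "z \<noteq> 0"
    using a decomp(1) by auto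
  moreover have "a \<bullet> z = z \<bullet> z"
    using decomp by (simp add: inner_add_left inner_commute[of "M *v u"])
  ultimately show ?thesis
    using that decomp(3) by simp
qed

lemma pinv_form_eq_SUP:
  fixes M :: "real^'n^'n"
  assumes S: "transpose M = M" and psd: "\<And>z. 0 \<le> z \<bullet> (M *v z)"
  shows "pinv_form a M = (SUP x. ereal (2 * (a \<bullet> x) - x \<bullet> (M *v x)))"
proof (cases "a \<in> range (\<lambda>x. M *v x)")
  case True
  then obtain y where a: "a = M *v y"
    by blast
  have "2 * (a \<bullet> x) - x \<bullet> (M *v x) \<le> y \<bullet> (M *v y)" for x
  proof -
    have "0 \<le> (x - y) \<bullet> (M *v (x - y))"
      by (rule psd)
    also have "\<dots> = y \<bullet> (M *v y) - (2 * (a \<bullet> x) - x \<bullet> (M *v x))"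
      using symmetric_inner_matrix_vector[OF S, of y x] a
      by (simp add: matrix_vector_mult_diff_distrib inner_diff_left inner_diff_right inner_commute)
    finally show ?thesis
      by simp
  qed
  moreover have "2 * (a \<bullet> y) - y \<bullet> (M *v y) = y \<bullet> (M *v y)"
    using symmetric_inner_matrix_vector[OF S, of y y] a by simp
  ultimately have "(SUP x. ereal (2 * (a \<bullet> x) - x \<bullet> (M *v x))) = ereal (y \<bullet> (M *v y))"
    by (intro antisym SUP_least SUP_upper2[of y]) auto
  then show ?thesis
    using pinv_form_range[OF S] a by simp
next
  case False
  then obtain z where z: "M *v z = 0" "0 < a \<bullet> z"
    by (rule kernel_witness_not_in_range[OF S])
  have "(SUP x. ereal (2 * (a \<bullet> x) - x \<bullet> (M *v x))) = \<infinity>"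
  proof (rule ereal_top)
    fix c
    let ?t = "\<bar>c\<bar> / (a \<bullet> z)"
    have "ereal c \<le> ereal (2 * (a \<bullet> (?t *\<^sub>R z)) - (?t *\<^sub>R z) \<bullet> (M *v (?t *\<^sub>R z)))"
      using z by (simp add: matrix_vector_mult_scaleR)
    then show "ereal c \<le> (SUP x. ereal (2 * (a \<bullet> x) - x \<bullet> (M *v x)))"
      by (rule SUP_upper2[OF UNIV_I])
  qed
  then show ?thesis
    using False by (simp add: pinv_form_def)
qed

section \<open>Continuity of the compressed inverses\<close>

lemma norm_matrix_vector_le_entry_sum:
  fixes E :: "real^'n^'m"
  shows "norm (E *v u) \<le> (\<Sum>i\<in>UNIV. \<Sum>j\<in>UNIV. \<bar>E $ i $ j\<bar>) * norm u"
  using onorm[OF matrix_vector_mul_bounded_linear, of E u] onorm_le_matrix_component_sum[of E]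
  by (meson mult_right_mono norm_ge_zero order_trans)

lemma entry_sum_tendsto_zero:
  fixes As :: "nat \<Rightarrow> real^'n^'m"
  assumes "As \<longlonglongrightarrow> A"
  shows "(\<lambda>n. \<Sum>i\<in>UNIV. \<Sum>j\<in>UNIV. \<bar>(As n - A) $ i $ j\<bar>) \<longlonglongrightarrow> 0"
proof -
  have "(\<lambda>n. \<Sum>i\<in>UNIV. \<Sum>j\<in>UNIV. \<bar>(As n - A) $ i $ j\<bar>)
      \<longlonglongrightarrow> (\<Sum>i\<in>UNIV. \<Sum>j\<in>(UNIV :: 'n set). \<bar>(A - A) $ i $ j\<bar>)"
    by (intro tendsto_intros tendsto_vec_nth assms)
  then show ?thesis
    by simp
qed

lemma quadratic_form_tendsto:
  fixes As :: "nat \<Rightarrow> real^'n^'n"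
  assumes "As \<longlonglongrightarrow> A"
  shows "(\<lambda>n. w \<bullet> (As n *v w)) \<longlonglongrightarrow> w \<bullet> (A *v w)"
proof -
  have "(\<lambda>n. \<Sum>i\<in>UNIV. w $ i * (\<Sum>j\<in>UNIV. As n $ i $ j * w $ j))
      \<longlonglongrightarrow> (\<Sum>i\<in>UNIV. w $ i * (\<Sum>j\<in>UNIV. A $ i $ j * w $ j))"
    by (intro tendsto_intros tendsto_vec_nth assms)
  then show ?thesis
    by (simp add: inner_vec_def matrix_vector_mult_def)
qed

lemma spd_coercive:
  fixes A :: "real^'k^'k"
  assumes A: "A \<in> spd"
  obtains l where "0 < l" and "\<And>u. l * (u \<bullet> u) \<le> u \<bullet> (A *v u)"
proof -
  have "continuous_on (sphere 0 1) (\<lambda>u::real^'k. u \<bullet> (A *v u))"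
    by (intro continuous_intros linear_continuous_on matrix_vector_mul_bounded_linear)
  moreover have "sphere (0::real^'k) 1 \<noteq> {}"
    by (metis ex_in_conv norm_axis_1 mem_sphere_0)
  ultimately obtain u0 where u0: "u0 \<in> sphere 0 1"
    and min: "\<And>u. u \<in> sphere 0 1 \<Longrightarrow> u0 \<bullet> (A *v u0) \<le> u \<bullet> (A *v u)"
    using continuous_attains_inf[OF compact_sphere] by blast
  have "u0 \<bullet> (A *v u0) * (u \<bullet> u) \<le> u \<bullet> (A *v u)" for u
  proof (cases "u = 0")
    case False
    let ?w = "(1 / norm u) *\<^sub>R u"
    have q: "u \<bullet> (A *v u) = (?w \<bullet> (A *v ?w)) * (u \<bullet> u)"
      using False by (simp add: matrix_vector_mult_scaleR power2_norm_eq_inner[symmetric] power2_eq_square)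
    have "u0 \<bullet> (A *v u0) \<le> ?w \<bullet> (A *v ?w)"
      using False by (intro min) simp
    then show ?thesis
      unfolding q by (rule mult_right_mono) simp
  qed simp
  moreover have "0 < u0 \<bullet> (A *v u0)"
    using u0 by (intro spd_quadratic_pos[OF A]) auto
  ultimately show ?thesis
    using that by blast
qed

lemma dagger_sub_perturbation:
  assumes A: "A \<in> spd" and B: "B \<in> spd"
    and l: "0 < l" "\<And>u. l * (u \<bullet> u) \<le> u \<bullet> (A *v u)"
    and e: "0 \<le> e" "e \<le> l / 2" "\<And>u. norm ((B - A) *v u) \<le> e * norm u"
  shows "norm (dagger_sub B I *v x - dagger_sub A I *v x) \<le> 2 * e * norm (dagger_sub A I *v x) / l"
proof -
  let ?v = "dagger_sub A I *v x"
  define d where "d = dagger_sub B I *v x - ?v"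
  have d: "supported_on d I"
    using dagger_sub_supported[of B I x] dagger_sub_supported[of A I x]
    by (simp add: supported_on_def d_def)
  \<comment> \<open>both compressed systems have the same right-hand side x on I\<close>
  have "d \<bullet> (B *v d) = - (d \<bullet> ((B - A) *v ?v))"
    using inner_supported_dagger_sub[OF B d] inner_supported_dagger_sub[OF A d]
    by (simp add: d_def matrix_vector_mult_diff_distrib matrix_vector_mult_diff_rdistrib inner_diff_right)
  also have "\<dots> \<le> norm d * norm ((B - A) *v ?v)"
    using Cauchy_Schwarz_ineq2[of d "(B - A) *v ?v"] by linarith
  also have "\<dots> \<le> norm d * (e * norm ?v)"
    using e(3) by (rule mult_left_mono) simp
  finally have upper: "d \<bullet> (B *v d) \<le> norm d * (e * norm ?v)" .
  have "\<bar>d \<bullet> ((B - A) *v d)\<bar> \<le> norm d * norm ((B - A) *v d)"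
    by (rule Cauchy_Schwarz_ineq2)
  also have "\<dots> \<le> norm d * (e * norm d)"
    using e(3) by (rule mult_left_mono) simp
  finally have "\<bar>d \<bullet> ((B - A) *v d)\<bar> \<le> e * (norm d * norm d)"
    by (simp add: mult.left_commute)
  moreover have "d \<bullet> (B *v d) = d \<bullet> (A *v d) + d \<bullet> ((B - A) *v d)"
    by (simp add: matrix_vector_mult_diff_rdistrib inner_diff_right)
  moreover have "l * (norm d * norm d) \<le> d \<bullet> (A *v d)"
    using l(2)[of d] by (simp add: norm_eq_sqrt_inner)
  moreover have "e * (norm d * norm d) \<le> l / 2 * (norm d * norm d)"
    using e(2) by (rule mult_right_mono) simp
  ultimately have "l / 2 * (norm d * norm d) \<le> d \<bullet> (B *v d)"
    by linarith
  with upper have key: "norm d * (l / 2 * norm d) \<le> norm d * (e * norm ?v)"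
    by (simp add: mult.left_commute)
  show ?thesis
  proof (cases "d = 0")
    case True
    then show ?thesis
      using l(1) e(1) by (simp add: d_def)
  next
    case False
    then have "l / 2 * norm d \<le> e * norm ?v"
      using mult_left_le_imp_le[OF key] by simp
    then show ?thesis
      using l(1) by (simp add: d_def field_simps)
  qed
qed

lemma dagger_sub_quadratic_tendsto:
  fixes As :: "nat \<Rightarrow> real^'k^'k"
  assumes lim: "As \<longlonglongrightarrow> A" and A: "A \<in> spd" and As: "\<And>n. As n \<in> spd"
  shows "(\<lambda>n. x \<bullet> (dagger_sub (As n) I *v x)) \<longlonglongrightarrow> x \<bullet> (dagger_sub A I *v x)"
proof -
  let ?v = "dagger_sub A I *v x"
  obtain l where l: "0 < l" "\<And>u. l * (u \<bullet> u) \<le> u \<bullet> (A *v u)"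
    using spd_coercive[OF A] by blast
  define e where "e n = (\<Sum>i\<in>UNIV. \<Sum>j\<in>UNIV. \<bar>(As n - A) $ i $ j\<bar>)" for n
  have e0: "e \<longlonglongrightarrow> 0"
    unfolding e_def by (rule entry_sum_tendsto_zero[OF lim])
  have "eventually (\<lambda>n. e n < l / 2) sequentially"
    using e0 l(1) by (intro order_tendstoD(2)) auto
  then have "eventually (\<lambda>n. norm (x \<bullet> (dagger_sub (As n) I *v x) - x \<bullet> ?v)
      \<le> norm x * (2 * e n * norm ?v / l)) sequentially"
  proof eventually_elim
    case (elim n)
    have "norm (x \<bullet> (dagger_sub (As n) I *v x) - x \<bullet> ?v)
        \<le> norm x * norm (dagger_sub (As n) I *v x - ?v)"
      unfolding inner_diff_right[symmetric] real_norm_def by (rule Cauchy_Schwarz_ineq2)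
    also have "\<dots> \<le> norm x * (2 * e n * norm ?v / l)"
      using elim norm_matrix_vector_le_entry_sum[of "As n - A"]
      by (intro mult_left_mono dagger_sub_perturbation[OF A As l]) (auto simp: e_def intro: sum_nonneg)
    finally show ?case .
  qed
  moreover have "(\<lambda>n. norm x * (2 * e n * norm ?v / l)) \<longlonglongrightarrow> 0"
    using e0 l(1) by (auto intro!: tendsto_eq_intros)
  ultimately have "(\<lambda>n. x \<bullet> (dagger_sub (As n) I *v x) - x \<bullet> ?v) \<longlonglongrightarrow> 0"
    by (rule Lim_null_comparison)
  then show ?thesis
    by (simp add: LIM_zero_iff)
qed

section \<open>Semicontinuity of the objective\<close>

definition info_matrix :: "('i::finite \<Rightarrow> 'k::finite set) \<Rightarrow> real^'i \<Rightarrow> real^'k^'k \<Rightarrow> real^'k^'k" where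
  "info_matrix Iset \<nu> A = (\<Sum>t\<in>UNIV. (\<nu> $ t) *\<^sub>R dagger_sub A (Iset t))"

lemma Fobj_eq_pinv_form: "Fobj Iset a \<nu> A = pinv_form a (info_matrix Iset \<nu> A)"
  by (simp add: Fobj_def pinv_form_def info_matrix_def Let_def)

lemma sum_matrix_vector_mult: "finite S \<Longrightarrow> (\<Sum>t\<in>S. f t) *v x = (\<Sum>t\<in>S. f t *v x)"
  by (induct rule: finite_induct) (simp_all add: matrix_vector_mult_add_rdistrib)

lemma info_matrix_mult_vector:
  "info_matrix Iset \<nu> A *v x = (\<Sum>t\<in>UNIV. \<nu> $ t *\<^sub>R (dagger_sub A (Iset t) *v x))"
  unfolding info_matrix_def by (simp add: sum_matrix_vector_mult scaleR_matrix_vector_assoc)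

lemma info_matrix_quadratic:
  "x \<bullet> (info_matrix Iset \<nu> A *v x) = (\<Sum>t\<in>UNIV. \<nu> $ t * (x \<bullet> (dagger_sub A (Iset t) *v x)))"
  by (simp add: info_matrix_mult_vector inner_sum_right)

lemma info_matrix_symmetric: "A \<in> spd \<Longrightarrow> transpose (info_matrix Iset \<nu> A) = info_matrix Iset \<nu> A"
  by (rule symmetric_matrixI)
    (simp add: info_matrix_mult_vector inner_sum_left inner_sum_right dagger_sub_symmetric)

lemma info_matrix_quadratic_nonneg:
  "A \<in> spd \<Longrightarrow> (\<And>t. 0 \<le> \<nu> $ t) \<Longrightarrow> 0 \<le> x \<bullet> (info_matrix Iset \<nu> A *v x)"
  unfolding info_matrix_quadratic
  by (intro sum_nonneg mult_nonneg_nonneg dagger_sub_quadratic_nonneg) auto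

lemma Fobj_eq_SUP:
  assumes "A \<in> spd" and "\<And>t. 0 \<le> \<nu> $ t"
  shows "Fobj Iset a \<nu> A =
    (SUP x. ereal (2 * (a \<bullet> x) - (\<Sum>t\<in>UNIV. \<nu> $ t * (x \<bullet> (dagger_sub A (Iset t) *v x)))))"
  unfolding Fobj_eq_pinv_form info_matrix_quadratic[symmetric]
  by (intro pinv_form_eq_SUP info_matrix_symmetric info_matrix_quadratic_nonneg assms)

lemma Fobj_upper_bound:
  assumes A: "A \<in> spd" and B: "B \<in> spd" and \<mu>: "\<And>t. 0 \<le> \<mu> $ t"
    and a: "a = info_matrix Iset \<mu> A *v y"
  shows "Fobj Iset a \<mu> B \<le>
    ereal (\<Sum>t\<in>UNIV. \<mu> $ t * ((dagger_sub A (Iset t) *v y) \<bullet> (B *v (dagger_sub A (Iset t) *v y))))"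
  unfolding Fobj_eq_SUP[OF B \<mu>]
proof (rule SUP_least)
  fix x
  let ?w = "\<lambda>t. dagger_sub A (Iset t) *v y"
  have "2 * (a \<bullet> x) - (\<Sum>t\<in>UNIV. \<mu> $ t * (x \<bullet> (dagger_sub B (Iset t) *v x)))
      = (\<Sum>t\<in>UNIV. \<mu> $ t * (2 * (?w t \<bullet> x) - x \<bullet> (dagger_sub B (Iset t) *v x)))"
    using a by (simp add: info_matrix_mult_vector inner_sum_left sum_distrib_left sum_subtractf algebra_simps)
  also have "\<dots> \<le> (\<Sum>t\<in>UNIV. \<mu> $ t * (?w t \<bullet> (B *v ?w t)))"
    by (intro sum_mono mult_left_mono dagger_sub_variational[OF B] dagger_sub_supported \<mu>)
  finally show "ereal (2 * (a \<bullet> x) - (\<Sum>t\<in>UNIV. \<mu> $ t * (x \<bullet> (dagger_sub B (Iset t) *v x))))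
      \<le> ereal (\<Sum>t\<in>UNIV. \<mu> $ t * (?w t \<bullet> (B *v ?w t)))"
    by simp
qed

lemma Fobj_lower_semicontinuous:
  assumes A: "A \<in> spd" and As: "\<And>n. As n \<in> spd" and "As \<longlonglongrightarrow> A"
    and \<nu>s: "\<And>n t. 0 \<le> \<nu>s n $ t" and \<nu>: "\<And>t. 0 \<le> \<nu> $ t" and "\<nu>s \<longlonglongrightarrow> \<nu>"
    and lt: "ereal r < Fobj Iset a \<nu> A"
  shows "\<forall>\<^sub>F n in sequentially. ereal r < Fobj Iset a (\<nu>s n) (As n)"
proof -
  let ?g = "\<lambda>\<nu> A x. 2 * (a \<bullet> x) - (\<Sum>t\<in>UNIV. \<nu> $ t * (x \<bullet> (dagger_sub A (Iset t) *v x)))"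
  obtain x where "r < ?g \<nu> A x"
    using lt unfolding Fobj_eq_SUP[OF A \<nu>] less_SUP_iff by auto
  moreover have "(\<lambda>n. ?g (\<nu>s n) (As n) x) \<longlonglongrightarrow> ?g \<nu> A x"
    by (intro tendsto_intros tendsto_vec_nth dagger_sub_quadratic_tendsto assms)
  ultimately have "\<forall>\<^sub>F n in sequentially. r < ?g (\<nu>s n) (As n) x"
    by (simp add: order_tendstoD(1))
  then show ?thesis
    by (rule eventually_mono) (auto simp: Fobj_eq_SUP[OF As \<nu>s] less_SUP_iff)
qed

lemma Fobj_upper_semicontinuous:
  assumes A: "A \<in> spd" and As: "\<And>n. As n \<in> spd" and "As \<longlonglongrightarrow> A"
    and \<mu>: "\<And>t. 0 \<le> \<mu> $ t" and lt: "Fobj Iset a \<mu> A < ereal r"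
  shows "\<forall>\<^sub>F n in sequentially. Fobj Iset a \<mu> (As n) < ereal r"
proof -
  let ?M = "info_matrix Iset \<mu> A"
  have "a \<in> range (\<lambda>x. ?M *v x)"
    using lt by (auto simp: Fobj_eq_pinv_form pinv_form_def split: if_splits)
  then obtain y where a: "a = ?M *v y"
    by blast
  \<comment> \<open>h is continuous, dominates F(\<mu>, B) and agrees with it at B = A\<close>
  let ?h = "\<lambda>B. \<Sum>t\<in>UNIV. \<mu> $ t * ((dagger_sub A (Iset t) *v y) \<bullet> (B *v (dagger_sub A (Iset t) *v y)))"
  have "Fobj Iset a \<mu> A = ereal (y \<bullet> (?M *v y))"
    unfolding Fobj_eq_pinv_form a by (rule pinv_form_range[OF info_matrix_symmetric[OF A]])
  also have "y \<bullet> (?M *v y) = ?h A"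
    by (simp add: info_matrix_quadratic dagger_sub_quadratic[OF A])
  finally have "?h A < r"
    using lt by simp
  moreover have "(\<lambda>n. ?h (As n)) \<longlonglongrightarrow> ?h A"
    by (intro tendsto_intros quadratic_form_tendsto assms)
  ultimately have "\<forall>\<^sub>F n in sequentially. ?h (As n) < r"
    by (simp add: order_tendstoD(2))
  then show ?thesis
  proof (rule eventually_mono)
    fix n
    assume "?h (As n) < r"
    then show "Fobj Iset a \<mu> (As n) < ereal r"
      by (intro le_less_trans[OF Fobj_upper_bound[OF A As \<mu> a]]) simp
  qed
qed

section \<open>Upper hemicontinuity\<close>

lemma Kset_nonneg: "\<nu> \<in> Kset c B0 \<Longrightarrow> 0 \<le> \<nu> $ t"
  by (simp add: Kset_def)

lemma Kset_closed: "closed (Kset c B0)"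
  unfolding closed_sequential_limits
proof (intro allI impI, elim conjE)
  fix \<nu>s \<nu> assume K: "\<forall>n. \<nu>s n \<in> Kset c B0" and lim: "\<nu>s \<longlonglongrightarrow> \<nu>"
  have "0 \<le> \<nu> $ t" for t
    by (rule LIMSEQ_le_const[OF tendsto_vec_nth[OF lim]]) (use K in \<open>auto simp: Kset_def\<close>)
  moreover have "(\<Sum>t\<in>UNIV. \<nu> $ t * c t $ j) \<le> B0 $ j" for j
  proof (rule LIMSEQ_le_const2)
    show "(\<lambda>n. \<Sum>t\<in>UNIV. \<nu>s n $ t * c t $ j) \<longlonglongrightarrow> (\<Sum>t\<in>UNIV. \<nu> $ t * c t $ j)"
      by (intro tendsto_intros tendsto_vec_nth lim)
  qed (use K in \<open>auto simp: Kset_def\<close>)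
  ultimately show "\<nu> \<in> Kset c B0"
    by (simp add: Kset_def)
qed

lemma Kset_compact:
  assumes c_nonneg: "\<And>t j. 0 \<le> c t $ j" and c_pos: "\<And>t. \<exists>j. 0 < c t $ j"
  shows "compact (Kset c B0)"
proof -
  obtain jt where jt: "\<And>t. 0 < c t $ jt t"
    using c_pos by metis
  \<comment> \<open>each budget constraint with a positive cost bounds the corresponding coordinate\<close>
  have le: "\<nu> $ t \<le> B0 $ jt t / c t $ jt t" if \<nu>: "\<nu> \<in> Kset c B0" for \<nu> t
  proof -
    have "\<nu> $ t * c t $ jt t \<le> (\<Sum>s\<in>UNIV. \<nu> $ s * c s $ jt t)"
      by (rule member_le_sum) (use Kset_nonneg[OF \<nu>] c_nonneg in auto)
    also have "\<dots> \<le> B0 $ jt t"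
      using \<nu> by (simp add: Kset_def)
    finally show ?thesis
      using jt[of t] by (simp add: pos_le_divide_eq)
  qed
  have "norm \<nu> \<le> (\<Sum>t\<in>UNIV. B0 $ jt t / c t $ jt t)" if "\<nu> \<in> Kset c B0" for \<nu>
  proof -
    have "norm \<nu> \<le> (\<Sum>t\<in>UNIV. \<bar>\<nu> $ t\<bar>)"
      by (rule norm_le_l1_cart)
    also have "\<dots> \<le> (\<Sum>t\<in>UNIV. B0 $ jt t / c t $ jt t)"
      using le[OF that] Kset_nonneg[OF that] by (intro sum_mono) (simp add: abs_of_nonneg)
    finally show ?thesis .
  qed
  then have "bounded (Kset c B0)"
    unfolding bounded_iff by blast
  with Kset_closed show ?thesis
    by (simp add: compact_eq_bounded_closed)
qed

lemma argminF_closed_graph: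
  assumes A: "A \<in> spd" and As: "\<And>n. As n \<in> spd" and lim_As: "As \<longlonglongrightarrow> A"
    and \<nu>s: "\<And>n. \<nu>s n \<in> argminF Iset a c B0 (As n)" and lim_\<nu>s: "\<nu>s \<longlonglongrightarrow> \<nu>"
  shows "\<nu> \<in> argminF Iset a c B0 A"
proof -
  have \<nu>sK: "\<nu>s n \<in> Kset c B0" for n
    using \<nu>s[of n] by (simp add: argminF_def)
  then have \<nu>K: "\<nu> \<in> Kset c B0"
    using Kset_closed[of c B0] lim_\<nu>s unfolding closed_sequential_limits by blast
  have "Fobj Iset a \<nu> A \<le> Fobj Iset a \<mu> A" if \<mu>K: "\<mu> \<in> Kset c B0" for \<mu>
  proof (rule ccontr)
    assume "\<not> ?thesis"
    then have "Fobj Iset a \<mu> A < Fobj Iset a \<nu> A"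
      by simp
    then obtain r where r: "Fobj Iset a \<mu> A < ereal r" "ereal r < Fobj Iset a \<nu> A"
      using ereal_dense2 by blast
    have "\<forall>\<^sub>F n in sequentially. Fobj Iset a \<mu> (As n) < ereal r"
      using Kset_nonneg[OF \<mu>K] by (rule Fobj_upper_semicontinuous[OF A As lim_As _ r(1)])
    moreover have "\<forall>\<^sub>F n in sequentially. ereal r < Fobj Iset a (\<nu>s n) (As n)"
      using Kset_nonneg[OF \<nu>sK] Kset_nonneg[OF \<nu>K]
      by (rule Fobj_lower_semicontinuous[OF A As lim_As _ _ lim_\<nu>s r(2)])
    ultimately have "\<forall>\<^sub>F n in sequentially. Fobj Iset a \<mu> (As n) < ereal r \<and> ereal r < Fobj Iset a (\<nu>s n) (As n)"
      by (rule eventually_conj)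
    then obtain n where "Fobj Iset a \<mu> (As n) < ereal r" "ereal r < Fobj Iset a (\<nu>s n) (As n)"
      by (auto simp: eventually_sequentially)
    moreover have "Fobj Iset a (\<nu>s n) (As n) \<le> Fobj Iset a \<mu> (As n)"
      using \<nu>s[of n] \<mu>K by (simp add: argminF_def)
    ultimately show False
      using le_less_trans less_asym by blast
  qed
  with \<nu>K show ?thesis
    by (simp add: argminF_def)
qed

lemma upper_hemicont_of_compact_closed_graph:
  fixes \<Phi> :: "'a::metric_space \<Rightarrow> 'b::metric_space set"
  assumes K: "compact K" and sub: "\<And>x. x \<in> S \<Longrightarrow> \<Phi> x \<subseteq> K"
    and graph: "\<And>xs ys x y. x \<in> S \<Longrightarrow> (\<And>n. xs n \<in> S) \<Longrightarrow> xs \<longlonglongrightarrow> x \<Longrightarrow>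
      (\<And>n. ys n \<in> \<Phi> (xs n)) \<Longrightarrow> ys \<longlonglongrightarrow> y \<Longrightarrow> y \<in> \<Phi> x"
  shows "upper_hemicont S \<Phi>"
  unfolding upper_hemicont_def
proof (intro ballI allI impI)
  fix x V
  assume x: "x \<in> S" and V: "open V \<and> \<Phi> x \<subseteq> V"
  show "\<exists>U. open U \<and> x \<in> U \<and> (\<forall>x'\<in>U \<inter> S. \<Phi> x' \<subseteq> V)"
  proof (rule ccontr)
    assume no_U: "\<not> ?thesis"
    have "\<exists>x' y. x' \<in> ball x (inverse (Suc n)) \<and> x' \<in> S \<and> y \<in> \<Phi> x' \<and> y \<notin> V" for n
      using no_U[unfolded not_ex, rule_format, of "ball x (inverse (Suc n))"] by auto
    then obtain xs ys where xs: "\<And>n. xs n \<in> ball x (inverse (Suc n))" "\<And>n. xs n \<in> S"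
      and ys: "\<And>n. ys n \<in> \<Phi> (xs n)" "\<And>n. ys n \<notin> V"
      by metis
    have "(\<lambda>n. dist (xs n) x) \<longlonglongrightarrow> 0"
    proof (rule Lim_null_comparison)
      show "\<forall>\<^sub>F n in sequentially. norm (dist (xs n) x) \<le> inverse (Suc n)"
        using xs(1) by (simp add: dist_commute less_imp_le)
    qed (rule LIMSEQ_inverse_real_of_nat)
    then have lim_xs: "xs \<longlonglongrightarrow> x"
      by (rule tendsto_dist_iff[THEN iffD2])
    have "\<forall>n. ys n \<in> K"
      using sub[OF xs(2)] ys(1) by blast
    then obtain r y where r: "strict_mono r" and lim_ys: "(ys \<circ> r) \<longlonglongrightarrow> y"
      using compact_imp_seq_compact[OF K, unfolded seq_compact_def] by blast
    have "y \<in> \<Phi> x"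
      by (rule graph[OF x _ LIMSEQ_subseq_LIMSEQ[OF lim_xs r] _ lim_ys]) (simp_all add: xs(2) ys(1))
    then have "\<forall>\<^sub>F n in sequentially. (ys \<circ> r) n \<in> V"
      using V by (intro topological_tendstoD[OF lim_ys]) auto
    then show False
      using ys(2) by (auto simp: eventually_sequentially)
  qed
qed

lemma upper_hemicont_singleton_tendsto:
  fixes \<Phi> :: "'a::topological_space \<Rightarrow> 'b::metric_space set"
  assumes uhc: "upper_hemicont S \<Phi>" and x: "x \<in> S" and xs: "\<And>n. xs n \<in> S" "xs \<longlonglongrightarrow> x"
    and single: "\<Phi> x = {y0}" and "0 < \<epsilon>"
  shows "\<exists>N0. \<forall>N\<ge>N0. \<forall>y\<in>\<Phi> (xs N). dist y y0 < \<epsilon>"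
proof -
  have "\<Phi> x \<subseteq> ball y0 \<epsilon>"
    using single \<open>0 < \<epsilon>\<close> by simp
  then have "\<exists>U. open U \<and> x \<in> U \<and> (\<forall>x'\<in>U \<inter> S. \<Phi> x' \<subseteq> ball y0 \<epsilon>)"
    by (intro uhc[unfolded upper_hemicont_def, rule_format, OF x]) simp
  then obtain U where U: "open U" "x \<in> U" and near: "\<And>x'. x' \<in> U \<inter> S \<Longrightarrow> \<Phi> x' \<subseteq> ball y0 \<epsilon>"
    by blast
  obtain N0 where N0: "\<And>N. N0 \<le> N \<Longrightarrow> xs N \<in> U"
    using topological_tendstoD[OF xs(2) U] by (auto simp: eventually_sequentially)
  show ?thesis
  proof (intro exI allI impI ballI)
    fix N y
    assume "N0 \<le> N" and "y \<in> \<Phi> (xs N)"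
    then have "y \<in> ball y0 \<epsilon>"
      using near N0 xs(1) by blast
    then show "dist y y0 < \<epsilon>"
      by (simp add: dist_commute)
  qed
qed

theorem lemmaE7:
  fixes Iset :: "'i::finite \<Rightarrow> 'k::finite set"
    and a :: "real^'k"
    and c :: "'i \<Rightarrow> real^'m::finite"
    and B0 :: "real^'m"
  assumes Iset_inj: "inj Iset"
    and Iset_ne: "\<And>t. Iset t \<noteq> {}"
    and a_ne: "a \<noteq> 0"
    and a_supp: "{i. a $ i \<noteq> 0} \<subseteq> (\<Union>t. Iset t)"
    and c_nonneg: "\<And>t j. c t $ j \<ge> 0"
    and c_pos: "\<And>t. \<exists>j. c t $ j > 0"
    and B0_pos: "\<And>j. B0 $ j > 0"
  shows "upper_hemicont spd (argminF Iset a c B0)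
    \<and> (\<forall>(Aseq :: nat \<Rightarrow> real^'k^'k) Astar \<nu>0.
          Astar \<in> spd \<and> (\<forall>N. Aseq N \<in> spd) \<and> Aseq \<longlonglongrightarrow> Astar
          \<and> argminF Iset a c B0 Astar = {\<nu>0} \<longrightarrow>
          (\<forall>\<epsilon>>0. \<exists>N0. \<forall>N\<ge>N0. \<forall>\<nu>\<in>argminF Iset a c B0 (Aseq N). norm (\<nu> - \<nu>0) < \<epsilon>))"
proof -
  \<comment> \<open>only the hypotheses on the costs are needed: they make K compact\<close>
  have uhc: "upper_hemicont spd (argminF Iset a c B0)"
  proof (rule upper_hemicont_of_compact_closed_graph)
    show "compact (Kset c B0)"
      using c_nonneg c_pos by (rule Kset_compact)
    show "argminF Iset a c B0 A \<subseteq> Kset c B0" for A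
      by (auto simp: argminF_def)
  qed (rule argminF_closed_graph)
  moreover have "\<exists>N0. \<forall>N\<ge>N0. \<forall>\<nu>\<in>argminF Iset a c B0 (Aseq N). norm (\<nu> - \<nu>0) < \<epsilon>"
    if prems: "Astar \<in> spd" "\<forall>N. Aseq N \<in> spd" "Aseq \<longlonglongrightarrow> Astar" "argminF Iset a c B0 Astar = {\<nu>0}" "0 < \<epsilon>"
    for Aseq :: "nat \<Rightarrow> real^'k^'k" and Astar \<nu>0 \<epsilon>
    using upper_hemicont_singleton_tendsto[OF uhc prems(1) _ prems(3-5)] prems(2)
    by (simp add: dist_norm)
  ultimately show ?thesis
    by blast
qed

end
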